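(* Assume the distribution $\mathcal D_2(\lambda)$ defined in the context and consider its marginal on $\mathbf X_1\setminus\{X_a\}$, with structures ranging over DAGs on $\mathbf X_1\setminus\{X_a\}$ with in-degree at most $k$. There is a unique optimal Markov equivalence class for this marginal, and the difference in scores between the optimal equivalence class and the second-best equivalence class is at least $\beta$.
   Context: Entropies use the natural logarithm; $k$ is a fixed positive integer. For a set of variables, a family is $\langle Y,\Pi\rangle$ with $\Pi$ not containing $Y$ and $|\Pi|\le k$, with $H(\langle Y,\Pi\rangle)=H(Y\mid\Pi)$; DAGs are identified with their sets of families and have score $\mathcal S(G)=-\sum_{f\in G}H(f)$. Markov-equivalent DAGs (same conditional independence constraints) form equivalence classes (ECs) with a common score. Construction. $\mathcal D_1$ is a distribution over a finite set $\mathbf X_1$ of at least $k$ discrete variables, containing a variable $X_a$, such that for some $\alpha,\beta>0$: (I) among DAGs over $\mathbf X_1$ with in-degree $\le k$ there is a unique optimal EC, with score gap at least $\beta$ to the next-best EC; (II) $X_a$ has no children in any structure of the optimal EC; (III) $H(X_a\mid\mathbf X_1\setminus\{X_a\})=\alpha$. Let $\mathbf X=\mathbf X_1\cup\{X_b\}$, $d=|\mathbf X|$. For $\lambda\in(0,\min(\alpha,\beta/(3d)))$, $\mathcal D_2(\lambda)$ is a distribution on $\mathbf X$ with marginal $\mathcal D_1$ on $\mathbf X_1$ such that: (IV) there is a hidden Bernoulli variable $C$ independent of $\mathbf X_1$ with $P[X_b=X_a\mid C=1]=1$ and $X_b$ independent of $\mathbf X_1$ given $C=0$; (V) $\max(H(X_b\mid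 X_a),H(X_a\mid X_b))=\lambda$. *)

theory Defs
  imports "HOL-Probability.Probability_Mass_Function" "HOL-Library.FuncSet"
begin

definition marg :: "('v \<Rightarrow> 'a) pmf \<Rightarrow> 'v set \<Rightarrow> ('v \<Rightarrow> 'a) pmf" where
  "marg P S = map_pmf (\<lambda>\<omega>. restrict \<omega> S) P"

definition ent :: "('v \<Rightarrow> 'a) pmf \<Rightarrow> 'v set \<Rightarrow> real" where
  "ent P S = - (\<Sum>z \<in> set_pmf (marg P S). pmf (marg P S) z * ln (pmf (marg P S) z))"

definition cond_ent :: "('v \<Rightarrow> 'a) pmf \<Rightarrow> 'v \<Rightarrow> 'v set \<Rightarrow> real" where
  "cond_ent P Y Par = ent P (insert Y Par) - ent P Par"

text \<open>A DAG on V with in-degree at most k, given by its parent function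
  (equivalently its set of families \<langle>v, G v\<rangle>, v \<in> V).\<close>
definition is_dag :: "'v set \<Rightarrow> nat \<Rightarrow> ('v \<Rightarrow> 'v set) \<Rightarrow> bool" where
  "is_dag V k G \<longleftrightarrow> (\<forall>v. G v \<subseteq> V - {v}) \<and> (\<forall>v. v \<notin> V \<longrightarrow> G v = {})
     \<and> (\<forall>v. card (G v) \<le> k) \<and> acyclic {(u, w). u \<in> G w}"

definition score :: "('v \<Rightarrow> 'a) pmf \<Rightarrow> 'v set \<Rightarrow> ('v \<Rightarrow> 'v set) \<Rightarrow> real" where
  "score P V G = - (\<Sum>v \<in> V. cond_ent P v (G v))"

definition adjacent :: "('v \<Rightarrow> 'v set) \<Rightarrow> 'v \<Rightarrow> 'v \<Rightarrow> bool" where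
  "adjacent G u w \<longleftrightarrow> u \<in> G w \<or> w \<in> G u"

definition is_trail :: "('v \<Rightarrow> 'v set) \<Rightarrow> 'v list \<Rightarrow> bool" where
  "is_trail G xs \<longleftrightarrow> xs \<noteq> [] \<and> distinct xs \<and>
     (\<forall>i. i + 1 < length xs \<longrightarrow> adjacent G (xs ! i) (xs ! (i + 1)))"

definition descendant :: "('v \<Rightarrow> 'v set) \<Rightarrow> 'v \<Rightarrow> 'v \<Rightarrow> bool" where
  "descendant G u w \<longleftrightarrow> (u, w) \<in> {(a, b). a \<in> G b}\<^sup>*"

definition active_trail :: "('v \<Rightarrow> 'v set) \<Rightarrow> 'v set \<Rightarrow> 'v list \<Rightarrow> bool" where
  "active_trail G Z xs \<longleftrightarrow> (\<forall>i. 0 < i \<and> i + 1 < length xs \<longrightarrow>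
     (if xs ! (i - 1) \<in> G (xs ! i) \<and> xs ! (i + 1) \<in> G (xs ! i)
      then (\<exists>d \<in> Z. descendant G (xs ! i) d)
      else xs ! i \<notin> Z))"

definition d_separated :: "('v \<Rightarrow> 'v set) \<Rightarrow> 'v \<Rightarrow> 'v \<Rightarrow> 'v set \<Rightarrow> bool" where
  "d_separated G x y Z \<longleftrightarrow>
     \<not> (\<exists>xs. is_trail G xs \<and> hd xs = x \<and> last xs = y \<and> active_trail G Z xs)"

definition markov_equiv :: "'v set \<Rightarrow> ('v \<Rightarrow> 'v set) \<Rightarrow> ('v \<Rightarrow> 'v set) \<Rightarrow> bool" where
  "markov_equiv V G1 G2 \<longleftrightarrow> (\<forall>x\<in>V. \<forall>y\<in>V. \<forall>Z. Z \<subseteq> V \<and> x \<noteq> y \<and> x \<notin> Z \<and> y \<notin> Z \<longrightarrow>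
     (d_separated G1 x y Z \<longleftrightarrow> d_separated G2 x y Z))"

text \<open>G is a member of the unique optimal equivalence class among DAGs on V with in-degree
  \<le> k, and every DAG outside its class scores at least \<beta> less.\<close>
definition optimal_with_gap ::
  "('v \<Rightarrow> 'a) pmf \<Rightarrow> 'v set \<Rightarrow> nat \<Rightarrow> real \<Rightarrow> ('v \<Rightarrow> 'v set) \<Rightarrow> bool" where
  "optimal_with_gap P V k \<beta> G \<longleftrightarrow> is_dag V k G
     \<and> (\<forall>G'. is_dag V k G' \<longrightarrow> score P V G' \<le> score P V G)
     \<and> (\<forall>G'. is_dag V k G' \<and> \<not> markov_equiv V G' G \<longrightarrow> score P V G' \<le> score P V G - \<beta>)"

end

theory Submission imports Defs begin

text \<open>Take an optimal DAG G for D1. By (II) applied to G itself, X_a is a sink of G, so G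
  is a DAG G_r on V = X_1 - {X_a} extended by a sink with parent set P = G X_a. Conversely
  every DAG H on V extends to the DAG H(X_a := P) on X_1; this shifts scores by the constant
  conditional entropy of X_a given P and, since a sink never lies on an active trail between
  two other variables, changes no d-separation among the variables of V. Hence G_r inherits
  optimality and the gap \<beta> from G on the marginal of D1 on V, which is also the marginal
  of D2 on V.\<close>

lemma descendant_add_sink_cases:
  assumes "\<forall>v. a \<notin> H v" "a \<notin> P" "descendant (H(a := P)) u d"
  shows "d = a \<or> descendant H u d"
  using assms(3) unfolding descendant_def
proof (induction rule: rtrancl_induct)
  case base
  then show ?case by simp
next
  case (step b c)
  show ?case
  proof (cases "c = a")
    case False
    with step.hyps(2) have "b \<in> H c" by simp
    with assms(1) step.IH have "(u, b) \<in> {(p, c). p \<in> H c}\<^sup>*" by auto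
    with \<open>b \<in> H c\<close> show ?thesis by (simp add: rtrancl.rtrancl_into_rtrancl)
  qed simp
qed

lemma descendant_add_sink:
  assumes "\<forall>v. a \<notin> H v" "a \<notin> P" "H a = {}" "d \<noteq> a"
  shows "descendant (H(a := P)) u d \<longleftrightarrow> descendant H u d"
proof
  assume "descendant H u d"
  moreover have "{(p, c). p \<in> H c} \<subseteq> {(p, c). p \<in> (H(a := P)) c}" using assms(3) by auto
  ultimately show "descendant (H(a := P)) u d" unfolding descendant_def using rtrancl_mono by blast
qed (use descendant_add_sink_cases[OF assms(1,2)] assms(4) in blast)

lemma descendant_of_sink:
  assumes "\<forall>v. a \<notin> H v" "a \<notin> P" "descendant (H(a := P)) a d"
  shows "d = a"
  using assms(3) unfolding descendant_def
proof (cases rule: converse_rtranclE)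
  case (step b)
  with assms(1,2) show ?thesis by (cases "b = a") auto
qed simp

lemma adjacent_sink:
  assumes "\<forall>v. a \<notin> H v" "a \<notin> P"
  shows "adjacent (H(a := P)) u a \<longleftrightarrow> u \<in> P" and "adjacent (H(a := P)) a u \<longleftrightarrow> u \<in> P"
  using assms unfolding adjacent_def by (cases "u = a"; simp)+

lemma trail_add_sink_avoiding:
  assumes "\<forall>v. a \<notin> H v" "a \<notin> P" "H a = {}" "a \<notin> set xs" "a \<notin> Z"
  shows "is_trail (H(a := P)) xs \<longleftrightarrow> is_trail H xs"
    and "active_trail (H(a := P)) Z xs \<longleftrightarrow> active_trail H Z xs"
proof -
  have upd: "(H(a := P)) (xs ! i) = H (xs ! i)" if "i < length xs" for i
    using assms(4) that nth_mem by force
  have "adjacent (H(a := P)) (xs ! i) (xs ! (i + 1)) \<longleftrightarrow> adjacent H (xs ! i) (xs ! (i + 1))"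
    if "i + 1 < length xs" for i
    using that upd[of i] upd[of "i + 1"] unfolding adjacent_def by simp
  then show "is_trail (H(a := P)) xs \<longleftrightarrow> is_trail H xs"
    unfolding is_trail_def by auto
  have desc: "(\<exists>d\<in>Z. descendant (H(a := P)) u d) \<longleftrightarrow> (\<exists>d\<in>Z. descendant H u d)" for u
  proof (rule bex_cong[OF refl])
    fix d assume "d \<in> Z"
    with assms(5) have "d \<noteq> a" by blast
    then show "descendant (H(a := P)) u d \<longleftrightarrow> descendant H u d"
      by (rule descendant_add_sink[OF assms(1-3)])
  qed
  have "(if xs ! (i - 1) \<in> (H(a := P)) (xs ! i) \<and> xs ! (i + 1) \<in> (H(a := P)) (xs ! i)
         then \<exists>d \<in> Z. descendant (H(a := P)) (xs ! i) d else xs ! i \<notin> Z) \<longleftrightarrow>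
        (if xs ! (i - 1) \<in> H (xs ! i) \<and> xs ! (i + 1) \<in> H (xs ! i)
         then \<exists>d \<in> Z. descendant H (xs ! i) d else xs ! i \<notin> Z)"
    if "i + 1 < length xs" for i
    using that upd[of i] desc by simp
  then show "active_trail (H(a := P)) Z xs \<longleftrightarrow> active_trail H Z xs"
    unfolding active_trail_def by blast
qed

lemma trail_neighbour_of_sink:
  assumes "\<forall>v. a \<notin> H v" "a \<notin> P" "is_trail (H(a := P)) xs" "0 < j" "j < length xs" "xs ! j = a"
  shows "xs ! (j - 1) \<in> P"
proof -
  obtain i where i: "j = Suc i" using assms(4) gr0_implies_Suc by blast
  have "adjacent (H(a := P)) (xs ! i) (xs ! j)"
    using assms(3,5) i unfolding is_trail_def by simp
  with assms(6) i show ?thesis using adjacent_sink(1)[OF assms(1,2)] by simp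
qed

lemma sink_notin_trail:
  assumes "\<forall>v. a \<notin> H v" "H a = {}" "is_trail H xs" "hd xs \<noteq> a"
  shows "a \<notin> set xs"
proof
  assume "a \<in> set xs"
  then obtain j where j: "j < length xs" "xs ! j = a" by (metis in_set_conv_nth)
  moreover have "j \<noteq> 0" using j assms(3,4) unfolding is_trail_def by (metis hd_conv_nth)
  moreover have "H(a := {}) = H" using assms(2) by (rule fun_upd_idem)
  ultimately show False using trail_neighbour_of_sink[of a H "{}" xs j] assms(1,3) by simp
qed

text \<open>An interior occurrence of the sink a would be a collider whose only descendant is a.\<close>
lemma sink_notin_active_trail:
  assumes "\<forall>v. a \<notin> H v" "a \<notin> P" "a \<notin> Z" "is_trail (H(a := P)) xs"
    "active_trail (H(a := P)) Z xs" "hd xs \<noteq> a" "last xs \<noteq> a"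
  shows "a \<notin> set xs"
proof
  assume "a \<in> set xs"
  then obtain j where j: "j < length xs" "xs ! j = a" by (metis in_set_conv_nth)
  have "xs \<noteq> []" using assms(4) unfolding is_trail_def by simp
  have "0 < j" using j assms(6) \<open>xs \<noteq> []\<close> by (auto simp: hd_conv_nth intro: gr0I)
  have "j \<noteq> length xs - 1" using j assms(7) \<open>xs \<noteq> []\<close> by (auto simp: last_conv_nth)
  with j(1) have "j + 1 < length xs" by simp
  have adj: "adjacent (H(a := P)) (xs ! j) (xs ! (j + 1))"
    using assms(4) \<open>j + 1 < length xs\<close> unfolding is_trail_def by blast
  have "xs ! (j - 1) \<in> P" using trail_neighbour_of_sink[OF assms(1,2,4) \<open>0 < j\<close> j] .
  moreover from adj have "xs ! (j + 1) \<in> P" using j(2) adjacent_sink(2)[OF assms(1,2)] by simp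
  moreover have "if xs ! (j - 1) \<in> (H(a := P)) (xs ! j) \<and> xs ! (j + 1) \<in> (H(a := P)) (xs ! j)
      then \<exists>d \<in> Z. descendant (H(a := P)) (xs ! j) d else xs ! j \<notin> Z"
    using assms(5) \<open>0 < j\<close> \<open>j + 1 < length xs\<close> unfolding active_trail_def by blast
  ultimately obtain d where "d \<in> Z" "descendant (H(a := P)) a d" using j(2) by auto
  then show False using descendant_of_sink[OF assms(1,2)] assms(3) by blast
qed

lemma d_separated_add_sink:
  assumes "\<forall>v. a \<notin> H v" "H a = {}" "a \<notin> P" "x \<noteq> a" "y \<noteq> a" "a \<notin> Z"
  shows "d_separated (H(a := P)) x y Z \<longleftrightarrow> d_separated H x y Z"
proof -
  have "is_trail (H(a := P)) xs \<and> active_trail (H(a := P)) Z xs \<longleftrightarrow>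
        is_trail H xs \<and> active_trail H Z xs" if "hd xs = x" "last xs = y" for xs
  proof (cases "a \<in> set xs")
    case True
    then show ?thesis
      using that assms(4,5) sink_notin_trail[OF assms(1,2)] sink_notin_active_trail[OF assms(1,3,6)]
      by blast
  qed (use trail_add_sink_avoiding[OF assms(1,3,2) _ assms(6)] in blast)
  then show ?thesis unfolding d_separated_def by blast
qed

lemma acyclic_add_sink:
  assumes "\<forall>v. a \<notin> H v" "a \<notin> P" "acyclic {(u, w). u \<in> H w}"
  shows "acyclic {(u, w). u \<in> (H(a := P)) w}"
proof -
  let ?R = "{(u, w). u \<in> H w}" and ?R' = "{(u, w). u \<in> (H(a := P)) w}"
  have no_out: "u \<noteq> a" if "(u, w) \<in> ?R'" for u w using assms(1,2) that by (auto split: if_splits)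
  have paths: "y = a \<or> (x, y) \<in> ?R\<^sup>+" if "(x, y) \<in> ?R'\<^sup>+" for x y
    using that
  proof (induction rule: trancl_induct)
    case (base y)
    then show ?case by (cases "y = a") auto
  next
    case (step y z)
    show ?case
    proof (cases "z = a")
      case False
      with step.hyps(2) have "(y, z) \<in> ?R" by simp
      moreover have "y \<noteq> a" using no_out step.hyps(2) .
      ultimately show ?thesis using step.IH trancl_into_trancl by fast
    qed simp
  qed
  show ?thesis unfolding acyclic_def
  proof (intro allI notI)
    fix x assume x: "(x, x) \<in> ?R'\<^sup>+"
    then obtain z where "(x, z) \<in> ?R'" by (meson converse_tranclE)
    then have "x \<noteq> a" by (rule no_out)
    with x paths have "(x, x) \<in> ?R\<^sup>+" by blast
    with assms(3) show False unfolding acyclic_def by blast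
  qed
qed

lemma is_dag_outside:
  assumes "is_dag V k H" "a \<notin> V"
  shows "\<forall>v. a \<notin> H v" and "H a = {}"
  using assms unfolding is_dag_def by (blast, simp)

lemma is_dag_add_sink:
  assumes "is_dag V k H" "a \<notin> V" "P \<subseteq> V" "card P \<le> k"
  shows "is_dag (insert a V) k (H(a := P))"
proof -
  have "a \<notin> P" using assms(2,3) by blast
  moreover have "acyclic {(u, w). u \<in> H w}" using assms(1) unfolding is_dag_def by blast
  ultimately have "acyclic {(u, w). u \<in> (H(a := P)) w}"
    by (rule acyclic_add_sink[OF is_dag_outside(1)[OF assms(1,2)]])
  moreover have "\<forall>v. (H(a := P)) v \<subseteq> insert a V - {v}"
    using assms(1-3) unfolding is_dag_def by auto
  moreover have "\<forall>v. v \<notin> insert a V \<longrightarrow> (H(a := P)) v = {}"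
    using assms(1) unfolding is_dag_def by simp
  moreover have "\<forall>v. card ((H(a := P)) v) \<le> k"
    using assms(1,4) unfolding is_dag_def by simp
  ultimately show ?thesis unfolding is_dag_def by (intro conjI)
qed

lemma is_dag_remove_sink:
  assumes "is_dag X k G" "\<forall>v. a \<notin> G v"
  shows "is_dag (X - {a}) k (G(a := {}))"
proof -
  have "{(u, w). u \<in> (G(a := {})) w} \<subseteq> {(u, w). u \<in> G w}" by auto
  with assms have "acyclic {(u, w). u \<in> (G(a := {})) w}"
    unfolding is_dag_def using acyclic_subset by blast
  with assms show ?thesis unfolding is_dag_def by auto
qed

lemma markov_equiv_refl: "markov_equiv V G G"
  unfolding markov_equiv_def by simp

lemma markov_equiv_add_sink:
  assumes "is_dag V k H" "is_dag V k' G" "a \<notin> V" "a \<notin> P"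
    and "markov_equiv (insert a V) (H(a := P)) (G(a := P))"
  shows "markov_equiv V H G"
  unfolding markov_equiv_def
proof (intro ballI allI impI)
  fix x y Z assume xyZ: "x \<in> V" "y \<in> V" "Z \<subseteq> V \<and> x \<noteq> y \<and> x \<notin> Z \<and> y \<notin> Z"
  then have a: "x \<noteq> a" "y \<noteq> a" "a \<notin> Z" using assms(3) by auto
  have "d_separated H x y Z \<longleftrightarrow> d_separated (H(a := P)) x y Z"
    using d_separated_add_sink[OF is_dag_outside[OF assms(1,3)] assms(4) a] by simp
  also have "\<dots> \<longleftrightarrow> d_separated (G(a := P)) x y Z"
    using assms(5) xyZ unfolding markov_equiv_def by blast
  also have "\<dots> \<longleftrightarrow> d_separated G x y Z"
    using d_separated_add_sink[OF is_dag_outside[OF assms(2,3)] assms(4) a] .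
  finally show "d_separated H x y Z \<longleftrightarrow> d_separated G x y Z" .
qed

lemma score_add_sink:
  assumes "finite V" "a \<notin> V"
  shows "score D (insert a V) (H(a := P)) = score D V H - cond_ent D a P"
proof -
  have "(\<Sum>v\<in>V. cond_ent D v ((H(a := P)) v)) = (\<Sum>v\<in>V. cond_ent D v (H v))"
    using assms(2) by (intro sum.cong) auto
  with assms show ?thesis unfolding score_def by simp
qed

lemma optimal_with_gap_remove_sink:
  assumes opt: "optimal_with_gap D X k \<beta> G" and "finite X" "a \<in> X" and sink: "\<forall>v. a \<notin> G v"
  shows "optimal_with_gap D (X - {a}) k \<beta> (G(a := {}))"
proof -
  define V where "V = X - {a}"
  define P where "P = G a"
  have X: "X = insert a V" "a \<notin> V" "finite V" using assms(2,3) unfolding V_def by auto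
  have dag: "is_dag X k G" using opt unfolding optimal_with_gap_def by blast
  then have P: "P \<subseteq> V" "card P \<le> k" "a \<notin> P" unfolding is_dag_def P_def V_def by auto
  have G: "G = (G(a := {}))(a := P)" unfolding P_def by simp
  have dag_rem: "is_dag V k (G(a := {}))" using is_dag_remove_sink[OF dag sink] unfolding V_def .
  have dag_ext: "is_dag X k (H(a := P))" if "is_dag V k H" for H
    using is_dag_add_sink[OF that X(2) P(1,2)] X(1) by simp
  have score_ext: "score D X (H(a := P)) = score D V H - cond_ent D a P" for H
    using score_add_sink[OF X(3,2)] X(1) by simp
  have equiv_ext: "markov_equiv V H (G(a := {}))"
    if "is_dag V k H" "markov_equiv X (H(a := P)) G" for H
    using markov_equiv_add_sink[OF that(1) dag_rem X(2) P(3)] that(2) X(1) G by simp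
  have score_rem: "score D V (G(a := {})) = score D X G + cond_ent D a P"
    using score_ext[of "G(a := {})"] G by simp
  show ?thesis
    unfolding optimal_with_gap_def V_def[symmetric]
  proof (intro conjI allI impI)
    fix H assume "is_dag V k H"
    then have "score D X (H(a := P)) \<le> score D X G"
      using opt dag_ext unfolding optimal_with_gap_def by blast
    then show "score D V H \<le> score D V (G(a := {}))" using score_ext score_rem by simp
  next
    fix H assume "is_dag V k H \<and> \<not> markov_equiv V H (G(a := {}))"
    then have "score D X (H(a := P)) \<le> score D X G - \<beta>"
      using opt dag_ext equiv_ext unfolding optimal_with_gap_def by blast
    then show "score D V H \<le> score D V (G(a := {})) - \<beta>" using score_ext score_rem by simp
  qed (rule dag_rem)
qed

lemma marg_marg: "marg (marg D A) B = marg D (A \<inter> B)"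
  unfolding marg_def by (simp add: map_pmf_comp)

lemma marg_eq_subset:
  assumes "marg D X = marg D' X" "V \<subseteq> X"
  shows "marg D V = marg D' V"
proof -
  have "marg D V = marg (marg D X) V" using assms(2) by (simp add: marg_marg Int_absorb1)
  also have "\<dots> = marg D' V" using assms by (simp add: marg_marg Int_absorb1)
  finally show ?thesis .
qed

lemma cond_ent_marg:
  assumes "insert v T \<subseteq> S"
  shows "cond_ent (marg D S) v T = cond_ent D v T"
proof -
  have "ent (marg D S) U = ent D U" if "U \<subseteq> S" for U
    using that unfolding ent_def by (simp add: marg_marg Int_absorb1)
  with assms show ?thesis unfolding cond_ent_def by simp
qed

lemma score_marg:
  assumes "\<forall>v\<in>V. H v \<subseteq> V"
  shows "score (marg D V) V H = score D V H"
proof -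
  have "cond_ent (marg D V) v (H v) = cond_ent D v (H v)" if "v \<in> V" for v
    using assms that cond_ent_marg[of v "H v" V] by blast
  then show ?thesis unfolding score_def by simp
qed

lemma optimal_with_gap_marg:
  "optimal_with_gap (marg D V) V k \<beta> G \<longleftrightarrow> optimal_with_gap D V k \<beta> G"
proof -
  have "score (marg D V) V H = score D V H" if "is_dag V k H" for H
    using that by (intro score_marg) (auto simp: is_dag_def)
  then show ?thesis unfolding optimal_with_gap_def by auto
qed

theorem lemma10:
  fixes X1 :: "'v set" and Xa Xb :: 'v and k :: nat
    and D1 D2 :: "('v \<Rightarrow> 'a::finite) pmf" and \<alpha> \<beta> lam :: real
  assumes k_pos: "k > 0"
    and X1_fin: "finite X1" and X1_card: "card X1 \<ge> k" and Xa_in: "Xa \<in> X1"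
    and \<alpha>_pos: "\<alpha> > 0" and \<beta>_pos: "\<beta> > 0"
    \<comment> \<open>(I) and (II)\<close>
    and opt1: "\<exists>G. optimal_with_gap D1 X1 k \<beta> G \<and>
                 (\<forall>G'. is_dag X1 k G' \<and> markov_equiv X1 G' G \<longrightarrow> (\<forall>v. Xa \<notin> G' v))"
    \<comment> \<open>(III)\<close>
    and H_a: "cond_ent D1 Xa (X1 - {Xa}) = \<alpha>"
    and Xb_new: "Xb \<notin> X1"
    and lam_pos: "lam > 0"
    and lam_bound: "lam < min \<alpha> (\<beta> / (3 * real (card (insert Xb X1))))"
    \<comment> \<open>D2 has marginal D1 on X1\<close>
    and marg_D2: "marg D2 X1 = marg D1 X1"
    \<comment> \<open>(IV): hidden Bernoulli variable C\<close>
    and hidden: "\<exists>Q :: (bool \<times> ('v \<Rightarrow> 'a)) pmf.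
        map_pmf snd Q = D2
      \<and> (\<forall>c z. measure_pmf.prob Q {(c', \<omega>). c' = c \<and> restrict \<omega> X1 = z}
               = measure_pmf.prob Q {(c', \<omega>). c' = c} * measure_pmf.prob Q {(c', \<omega>). restrict \<omega> X1 = z})
      \<and> (measure_pmf.prob Q {(c, \<omega>). c} > 0 \<longrightarrow>
           measure_pmf.prob Q {(c, \<omega>). c \<and> \<omega> Xb = \<omega> Xa} = measure_pmf.prob Q {(c, \<omega>). c})
      \<and> (\<forall>b z. measure_pmf.prob Q {(c, \<omega>). \<not> c \<and> \<omega> Xb = b \<and> restrict \<omega> X1 = z}
                 * measure_pmf.prob Q {(c, \<omega>). \<not> c}
               = measure_pmf.prob Q {(c, \<omega>). \<not> c \<and> \<omega> Xb = b}
                 * measure_pmf.prob Q {(c, \<omega>). \<not> c \<and> restrict \<omega> X1 = z})"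
    \<comment> \<open>(V)\<close>
    and H_ab: "max (cond_ent D2 Xb {Xa}) (cond_ent D2 Xa {Xb}) = lam"
  shows "\<exists>G. optimal_with_gap (marg D2 (X1 - {Xa})) (X1 - {Xa}) k \<beta> G"
proof -
  obtain G where opt: "optimal_with_gap D1 X1 k \<beta> G"
    and no_children: "\<forall>G'. is_dag X1 k G' \<and> markov_equiv X1 G' G \<longrightarrow> (\<forall>v. Xa \<notin> G' v)"
    using opt1 by blast
  have "\<forall>v. Xa \<notin> G v"
    using no_children opt markov_equiv_refl unfolding optimal_with_gap_def by blast
  then have "optimal_with_gap D1 (X1 - {Xa}) k \<beta> (G(Xa := {}))"
    using optimal_with_gap_remove_sink[OF opt X1_fin Xa_in] by blast
  moreover have "marg D2 (X1 - {Xa}) = marg D1 (X1 - {Xa})"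
    using marg_eq_subset[OF marg_D2] by blast
  ultimately have "optimal_with_gap (marg D2 (X1 - {Xa})) (X1 - {Xa}) k \<beta> (G(Xa := {}))"
    by (simp add: optimal_with_gap_marg)
  then show ?thesis by blast
qed

end
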